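(* If the MDE $\check{\Sigma}$ of $\Sigma$ under ${\rm M}_+(G)$ exists, it is the unique positive definite solution to the following system, where $\check K=\check{\Sigma}^{-1}$ and $\widehat{K}=\widehat{\Sigma}^{-1}$: (i) $\check{\Sigma}_{ij} \geq 0$ for $ij\in E(G)$; (ii) $\widehat{\Sigma}_{ij}=S_{ij}$ for $ij\in E(G)$; (iii) $\widehat{\Sigma}_{ii}=S_{ii}$ for $i\in V(G)$; (iv) $\check K_{ij} = \widehat{K}_{ij}=0$ for $ij\notin E(G)$; (v) $\check K_{ij} \leq \widehat{K}_{ij}$ for $ij\in E(G)$; (vi) $\check K_{ii} =\widehat{K}_{ii}$ for $i\in V(G)$; (vii) $\check{\Sigma}_{ij}(\widehat{K}_{ij}- \check K_{ij})=0$ for $ij\in E(G)$.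
   Context: Let $G=(V,E)$ be an undirected graph on $V=\{1,\ldots,d\}$, and let $S$ be the sample covariance matrix of $n$ i.i.d. observations from $N(0,\Sigma^* )$. $M(G)$ is the Gaussian graphical model ($(\Sigma^{-1})_{ij}=0$ for $ij\notin E$), $A(G)$ the set of positive definite $\Sigma$ with $\Sigma_{ij}\geq 0$ for all $ij\in E$ (locally associated Gaussian distributions), and ${\rm M}_+(G)=A(G)\cap M(G)$. $\widehat K$ is the maximum likelihood estimate of $K=\Sigma^{-1}$ in $M(G)$. The mixed dual estimate (MDE) $\check\Sigma$ is the solution of minimizing $-\log\det\Sigma+\operatorname{tr}(\Sigma\widehat K)$ over positive definite $\Sigma$ subject to $\Sigma_{ij}\geq 0$ for all $ij\in E(G)$. *)

theory Defs
  imports "HOL-Analysis.Analysis"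
begin

text \<open>Vertex set V = UNIV of a finite index type 'n; edges given by a symmetric
irreflexive relation E. Matrices are real^'n^'n.\<close>

definition pos_def_mat :: "real^'n::finite^'n \<Rightarrow> bool" where
  "pos_def_mat A \<longleftrightarrow> transpose A = A \<and> (\<forall>x. x \<noteq> 0 \<longrightarrow> 0 < x \<bullet> (A *v x))"

text \<open>Sample covariance of observations X 0, ..., X (n-1) from a mean-zero Gaussian.\<close>
definition sample_cov :: "nat \<Rightarrow> (nat \<Rightarrow> real^'n::finite) \<Rightarrow> real^'n^'n" where
  "sample_cov n X = (1 / real n) *\<^sub>R (\<Sum>k<n. (\<chi> i j. X k $ i * X k $ j))"

definition ggm_mle :: "('n::finite \<Rightarrow> 'n \<Rightarrow> bool) \<Rightarrow> real^'n^'n \<Rightarrow> real^'n^'n \<Rightarrow> bool" where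
  "ggm_mle E S K \<longleftrightarrow> pos_def_mat K \<and> (\<forall>i j. i \<noteq> j \<and> \<not> E i j \<longrightarrow> K $ i $ j = 0) \<and>
     (\<forall>K'. pos_def_mat K' \<and> (\<forall>i j. i \<noteq> j \<and> \<not> E i j \<longrightarrow> K' $ i $ j = 0) \<longrightarrow>
        ln (det K') - trace (S ** K') \<le> ln (det K) - trace (S ** K))"

definition mde :: "('n::finite \<Rightarrow> 'n \<Rightarrow> bool) \<Rightarrow> real^'n^'n \<Rightarrow> real^'n^'n \<Rightarrow> bool" where
  "mde E Khat Sig \<longleftrightarrow> pos_def_mat Sig \<and> (\<forall>i j. E i j \<longrightarrow> 0 \<le> Sig $ i $ j) \<and>
     (\<forall>Sig'. pos_def_mat Sig' \<and> (\<forall>i j. E i j \<longrightarrow> 0 \<le> Sig' $ i $ j) \<longrightarrow>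
        - ln (det Sig) + trace (Sig ** Khat) \<le> - ln (det Sig') + trace (Sig' ** Khat))"

text \<open>The system (i)-(vii) in the unknowns Sh (= Sigma-hat) and Sc (= Sigma-check).\<close>
definition mde_system :: "('n::finite \<Rightarrow> 'n \<Rightarrow> bool) \<Rightarrow> real^'n^'n \<Rightarrow> real^'n^'n \<Rightarrow> real^'n^'n \<Rightarrow> bool" where
  "mde_system E S Sh Sc \<longleftrightarrow>
     (\<forall>i j. E i j \<longrightarrow> 0 \<le> Sc $ i $ j) \<and>
     (\<forall>i j. E i j \<longrightarrow> Sh $ i $ j = S $ i $ j) \<and>
     (\<forall>i. Sh $ i $ i = S $ i $ i) \<and>
     (\<forall>i j. i \<noteq> j \<and> \<not> E i j \<longrightarrow> matrix_inv Sc $ i $ j = 0 \<and> matrix_inv Sh $ i $ j = 0) \<and>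
     (\<forall>i j. E i j \<longrightarrow> matrix_inv Sc $ i $ j \<le> matrix_inv Sh $ i $ j) \<and>
     (\<forall>i. matrix_inv Sc $ i $ i = matrix_inv Sh $ i $ i) \<and>
     (\<forall>i j. E i j \<longrightarrow> Sc $ i $ j * (matrix_inv Sh $ i $ j - matrix_inv Sc $ i $ j) = 0)"

end

theory Submission
  imports Defs
begin

text \<open>Both estimators minimise the loss L_K(Sigma) = - ln det Sigma + tr(Sigma K) over a convex
  set cut out by linear constraints: the MLE (as a concentration matrix) with K = S, the MDE with
  K = Khat. Everything rests on the matrix inequality ln det B - ln det A \<le> tr(A^-1 B) - n, with
  equality only for B = A. Applied to A + tH against A and letting t tend to 0, it yields the
  first-order conditions (ii)-(vii). Conversely, a positive definite solution A of these conditions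
  satisfies tr(A K) \<le> n and tr(A^-1 B) \<le> tr(B K) for the minimiser B, and then
  L_K(B) \<le> L_K(A) forces equality in the inequality, hence B = A. The inequality reduces, by a
  congruence taking A to the identity, to ln det C \<le> tr C - n, i.e. to ln x \<le> x - 1 for the
  diagonal entries after diagonalising C by symmetric Gaussian elimination, which has unit
  determinant and does not increase the trace.\<close>

section \<open>Matrix inverse, trace and congruence\<close>

lemma matrix_inv_right:
  fixes A :: "'a::field^'n::finite^'n"
  assumes "invertible A"
  shows "A ** matrix_inv A = mat 1"
  using someI_ex[OF assms[unfolded invertible_def]] by (simp add: matrix_inv_def)

lemma matrix_inv_left:
  fixes A :: "'a::field^'n::finite^'n"
  assumes "invertible A"
  shows "matrix_inv A ** A = mat 1"
  using matrix_inv_right[OF assms] matrix_left_right_inverse by blast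

lemma matrix_inv_unique:
  fixes A B :: "'a::field^'n::finite^'n"
  assumes "A ** B = mat 1"
  shows "matrix_inv A = B"
proof -
  have inv: "invertible A"
    using assms invertible_right_inverse by blast
  have "matrix_inv A = matrix_inv A ** (A ** B)" by (simp add: assms)
  also have "\<dots> = B" by (simp add: matrix_mul_assoc matrix_inv_left[OF inv])
  finally show ?thesis .
qed

lemma matrix_inv_inv:
  fixes A :: "'a::field^'n::finite^'n"
  assumes "invertible A"
  shows "matrix_inv (matrix_inv A) = A"
  by (rule matrix_inv_unique) (rule matrix_inv_left[OF assms])

lemma transpose_add: "transpose (A + B) = transpose A + transpose (B::'a::plus^'n^'m)"
  by (simp add: transpose_def vec_eq_iff)

lemma matrix_add_rdistrib: "((A::'a::semiring_1^'n^'m) + B) ** C = A ** C + B ** C"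
  by (simp add: matrix_matrix_mult_def vec_eq_iff distrib_right sum.distrib)

lemma trace_scaleR: "trace (c *\<^sub>R (A::real^'n^'n)) = c * trace A"
  by (simp add: trace_def sum_distrib_left)

lemma trace_matrix_mult:
  "trace ((A::'a::semiring_1^'n^'n) ** B) = (\<Sum>i\<in>UNIV. \<Sum>j\<in>UNIV. A$i$j * B$j$i)"
  by (simp add: trace_def matrix_matrix_mult_def)

lemma trace_matrix_mult_uminus_right: "trace ((A::'a::ring_1^'n^'n) ** - B) = - trace (A ** B)"
  by (simp add: trace_matrix_mult sum_negf)

lemma trace_matrix_mult_uminus_left: "trace (- B ** (A::'a::ring_1^'n^'n)) = - trace (B ** A)"
  by (simp add: trace_matrix_mult sum_negf)

lemma trace_mult_eq_on_support:
  fixes A A' B :: "'a::semiring_1^'n^'n"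
  assumes "\<And>i j. B $ j $ i \<noteq> 0 \<Longrightarrow> A $ i $ j = A' $ i $ j"
  shows "trace (A ** B) = trace (A' ** B)"
  unfolding trace_matrix_mult using assms by (intro sum.cong refl) (metis mult_zero_right)

lemma congruence_diagonal_entry:
  fixes Q :: "'a::comm_semiring_1^'n::finite^'n" and d :: "'n \<Rightarrow> 'a"
  defines "Dg \<equiv> \<chi> i j. if i = j then d i else 0"
  shows "(transpose Dg ** Q ** Dg) $ i $ j = d i * Q $ i $ j * d j"
  by (simp add: Dg_def matrix_matrix_mult_def transpose_def
      if_distrib[of "\<lambda>x. x * _"] if_distrib[of "\<lambda>x. _ * x"] cong: if_cong)

lemma congruence_row_elimination_entry:
  fixes Q :: "'a::comm_ring_1^'n::finite^'n" and c :: "'a^'n" and a :: 'n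
  defines "L \<equiv> \<chi> i j. (if i = j then 1 else 0) - (if i = a then c$j else 0)"
  shows "(transpose L ** Q ** L)$i$j = Q$i$j - c$i * Q$a$j - Q$i$a * c$j + Q$a$a * c$i * c$j"
proof -
  have LQ: "(transpose L ** Q)$i$k = Q$i$k - c$i * Q$a$k" for i k
  proof -
    have "(transpose L ** Q)$i$k
        = (\<Sum>l\<in>UNIV. (if l = i then Q$l$k else 0) - (if l = a then c$i * Q$l$k else 0))"
      by (simp add: matrix_matrix_mult_def transpose_def L_def left_diff_distrib
          if_distrib[of "\<lambda>x. x * _"] cong: if_cong)
    then show ?thesis by (simp add: sum_subtractf)
  qed
  have "(transpose L ** Q ** L)$i$j = (\<Sum>k\<in>UNIV. (transpose L ** Q)$i$k * L$k$j)"
    unfolding matrix_matrix_mult_def[of "transpose L ** Q" L] by simp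
  also have "\<dots> = (\<Sum>k\<in>UNIV. (if k = j then Q$i$k - c$i * Q$a$k else 0)
                        - (if k = a then (Q$i$k - c$i * Q$a$k) * c$j else 0))"
    unfolding LQ
    by (simp add: L_def right_diff_distrib if_distrib[of "\<lambda>x. _ * x"] cong: if_cong)
  finally show ?thesis by (simp add: sum_subtractf algebra_simps)
qed

lemma det_row_elimination:
  fixes c :: "'a::field^'n::finite"
  assumes "c$a = 0"
  shows "det (\<chi> i j. (if i = j then 1 else 0) - (if i = a then c$j else 0)) = 1"
proof -
  have "-c = (\<Sum>j\<in>UNIV - {a}. (-c$j) *s row j (mat 1::'a^'n^'n))"
    by (auto simp: vec_eq_iff sum_component row_def mat_def assms if_distrib cong: if_cong)
  also have "\<dots> \<in> vec.span {row j (mat 1::'a^'n^'n) |j. j \<noteq> a}"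
    by (intro vec.span_sum vec.span_scale vec.span_base) auto
  finally have "-c \<in> vec.span {row j (mat 1::'a^'n^'n) |j. j \<noteq> a}" .
  moreover have "(\<chi> i j. (if i = j then 1 else 0) - (if i = a then c$j else 0))
      = (\<chi> k. if k = a then row a (mat 1) + (-c) else row k (mat 1))"
    by (auto simp: vec_eq_iff row_def mat_def)
  ultimately show ?thesis using det_row_span[of "-c" "mat 1" a] by simp
qed

section \<open>Positive definite matrices\<close>

lemma pos_def_mat_symmetric: "pos_def_mat A \<Longrightarrow> transpose A = A"
  by (simp add: pos_def_mat_def)

lemma pos_def_mat_entry_sym:
  assumes "pos_def_mat A"
  shows "A $ i $ j = A $ j $ i"
proof -
  have "transpose A $ j $ i = A $ j $ i"
    using pos_def_mat_symmetric[OF assms] by simp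
  then show ?thesis by (simp add: transpose_def)
qed

lemma pos_def_mat_diag_pos:
  fixes Q :: "real^'n::finite^'n"
  assumes "pos_def_mat Q"
  shows "0 < Q $ a $ a"
proof -
  have "0 < axis a 1 \<bullet> (Q *v axis a 1)"
    using assms unfolding pos_def_mat_def by (metis axis_eq_0_iff zero_neq_one)
  also have "axis a 1 \<bullet> (Q *v axis a 1) = Q $ a $ a"
    unfolding inner_axis'
    by (simp add: matrix_vector_mult_def axis_def if_distrib[of "\<lambda>x. _ * x"] cong: if_cong)
  finally show ?thesis .
qed

lemma pos_def_mat_congruence:
  fixes L Q :: "real^'n::finite^'n"
  assumes Q: "pos_def_mat Q" and L: "invertible L"
  shows "pos_def_mat (transpose L ** Q ** L)"
  unfolding pos_def_mat_def
proof safe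
  show "transpose (transpose L ** Q ** L) = transpose L ** Q ** L"
    using pos_def_mat_symmetric[OF Q] by (simp add: matrix_transpose_mul matrix_mul_assoc)
next
  fix x :: "real^'n"
  assume "x \<noteq> 0"
  then have "L *v x \<noteq> 0"
    using inj_matrix_vector_mult[OF L] by (metis injD matrix_vector_mult_0_right)
  then have "0 < (L *v x) \<bullet> (Q *v (L *v x))"
    using Q unfolding pos_def_mat_def by blast
  also have "(L *v x) \<bullet> (Q *v (L *v x)) = x \<bullet> ((transpose L ** Q ** L) *v x)"
    by (simp add: matrix_vector_mul_assoc[symmetric] dot_lmul_matrix[symmetric]
        del: transpose_matrix_vector)
  finally show "0 < x \<bullet> ((transpose L ** Q ** L) *v x)" .
qed

definition diagonal_rows :: "'n::finite set \<Rightarrow> real^'n^'n \<Rightarrow> bool" where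
  "diagonal_rows D Q \<longleftrightarrow> (\<forall>i\<in>D. \<forall>j. j \<noteq> i \<longrightarrow> Q $ i $ j = 0)"

text \<open>Subtracting multiples of row and column a clears row a, keeps the rows in D cleared, and
  lowers the trace by Q_aa times the squared length of the multiplier vector c.\<close>

lemma pos_def_mat_eliminate_row:
  fixes Q :: "real^'n::finite^'n"
  assumes Q: "pos_def_mat Q" and D: "diagonal_rows D Q"
  obtains L where "det L = 1" "diagonal_rows (insert a D) (transpose L ** Q ** L)"
    "trace (transpose L ** Q ** L) < trace Q \<or> transpose L ** Q ** L = Q"
proof -
  define c :: "real^'n" where "c = (\<chi> j. if j = a then 0 else Q$a$j / Q$a$a)"
  define L :: "real^'n^'n" where "L = (\<chi> i j. (if i = j then 1 else 0) - (if i = a then c$j else 0))"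
  define Q' where "Q' = transpose L ** Q ** L"
  have qaa: "Q$a$a > 0" by (rule pos_def_mat_diag_pos[OF Q])
  have sym: "\<And>i j. Q$i$j = Q$j$i" using pos_def_mat_entry_sym[OF Q] .
  have ca: "c$a = 0" by (simp add: c_def)
  have Q'_entry: "Q'$i$j = Q$i$j - c$i * Q$a$j - Q$i$a * c$j + Q$a$a * c$i * c$j" for i j
    unfolding Q'_def L_def by (rule congruence_row_elimination_entry)
  have "det L = 1"
    unfolding L_def by (rule det_row_elimination[OF ca])
  moreover have "diagonal_rows (insert a D) Q'"
    unfolding diagonal_rows_def
  proof (intro ballI allI impI)
    fix i j assume i: "i \<in> insert a D" and "j \<noteq> i"
    show "Q'$i$j = 0"
    proof (cases "i = a")
      case True
      then show ?thesis using \<open>j \<noteq> i\<close> qaa by (simp add: Q'_entry ca c_def)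
    next
      case False
      then have "i \<in> D" using i by simp
      then have "Q$i$a = 0" "Q$i$j = 0" using D False \<open>j \<noteq> i\<close> by (auto simp: diagonal_rows_def)
      moreover have "c$i = 0" using \<open>Q$i$a = 0\<close> sym[of a i] by (simp add: c_def)
      ultimately show ?thesis by (simp add: Q'_entry)
    qed
  qed
  moreover have "trace Q' < trace Q \<or> Q' = Q"
  proof -
    have "Q'$j$j = Q$j$j - Q$a$a * (c$j)^2" for j
      using qaa sym[of j a] by (cases "j = a") (auto simp: Q'_entry c_def ca power2_eq_square)
    then have trace: "trace Q' = trace Q - Q$a$a * (\<Sum>j\<in>UNIV. (c$j)^2)"
      by (simp add: trace_def sum_subtractf sum_distrib_left)
    show ?thesis
    proof (cases "c = 0")
      case True
      then show ?thesis by (simp add: vec_eq_iff Q'_entry)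
    next
      case False
      then obtain j where "c$j \<noteq> 0" by (auto simp: vec_eq_iff)
      then have "0 < (\<Sum>j\<in>UNIV. (c$j)^2)"
        by (intro sum_pos2[of UNIV j]) auto
      then show ?thesis using trace qaa by simp
    qed
  qed
  ultimately show ?thesis using that unfolding Q'_def by blast
qed

lemma pos_def_mat_unit_congruent_diagonal_rows:
  fixes Q :: "real^'n::finite^'n"
  assumes Q: "pos_def_mat Q" and "finite D"
  shows "\<exists>L. det L = 1 \<and> diagonal_rows D (transpose L ** Q ** L) \<and>
           (trace (transpose L ** Q ** L) < trace Q \<or> transpose L ** Q ** L = Q)"
  using \<open>finite D\<close>
proof (induction D rule: finite_induct)
  case empty
  show ?case by (intro exI[of _ "mat 1"]) (simp add: diagonal_rows_def)
next
  case (insert a D)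
  then obtain L where L: "det L = 1" "diagonal_rows D (transpose L ** Q ** L)"
    "trace (transpose L ** Q ** L) < trace Q \<or> transpose L ** Q ** L = Q"
    by blast
  have "pos_def_mat (transpose L ** Q ** L)"
    using L(1) by (intro pos_def_mat_congruence[OF Q]) (simp add: invertible_det_nz)
  then obtain M where M: "det M = 1"
    "diagonal_rows (insert a D) (transpose M ** (transpose L ** Q ** L) ** M)"
    "trace (transpose M ** (transpose L ** Q ** L) ** M) < trace (transpose L ** Q ** L) \<or>
     transpose M ** (transpose L ** Q ** L) ** M = transpose L ** Q ** L"
    using pos_def_mat_eliminate_row L(2) by blast
  have "transpose (L ** M) ** Q ** (L ** M) = transpose M ** (transpose L ** Q ** L) ** M"
    by (simp add: matrix_transpose_mul matrix_mul_assoc)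
  then show ?case
    using L(1,3) M by (intro exI[of _ "L ** M"]) (auto simp: det_mul)
qed

lemma pos_def_mat_unit_congruent_diagonal:
  fixes Q :: "real^'n::finite^'n"
  assumes Q: "pos_def_mat Q"
  obtains L where "det L = 1" "pos_def_mat (transpose L ** Q ** L)"
    "\<And>i j. i \<noteq> j \<Longrightarrow> (transpose L ** Q ** L) $ i $ j = 0"
    "trace (transpose L ** Q ** L) < trace Q \<or> transpose L ** Q ** L = Q"
proof -
  obtain L where L: "det L = 1" "diagonal_rows UNIV (transpose L ** Q ** L)"
    "trace (transpose L ** Q ** L) < trace Q \<or> transpose L ** Q ** L = Q"
    using pos_def_mat_unit_congruent_diagonal_rows[OF Q finite] by blast
  moreover have "pos_def_mat (transpose L ** Q ** L)"
    using L(1) by (intro pos_def_mat_congruence[OF Q]) (simp add: invertible_det_nz)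
  moreover have "\<And>i j. i \<noteq> j \<Longrightarrow> (transpose L ** Q ** L) $ i $ j = 0"
    using L(2) unfolding diagonal_rows_def by auto
  ultimately show ?thesis using L(1,3) by (intro that)
qed

lemma pos_def_mat_det_pos:
  fixes Q :: "real^'n::finite^'n"
  assumes "pos_def_mat Q"
  shows "0 < det Q"
proof -
  obtain L where L: "det L = 1" "pos_def_mat (transpose L ** Q ** L)"
    "\<And>i j. i \<noteq> j \<Longrightarrow> (transpose L ** Q ** L) $ i $ j = 0"
    using pos_def_mat_unit_congruent_diagonal[OF assms] by metis
  have "0 < (\<Prod>i\<in>UNIV. (transpose L ** Q ** L) $ i $ i)"
    by (rule prod_pos) (rule pos_def_mat_diag_pos[OF L(2)])
  also have "\<dots> = det (transpose L ** Q ** L)"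
    by (rule det_diagonal[OF L(3), symmetric])
  also have "\<dots> = det Q"
    using L(1) by (simp only: det_mul det_transpose)
  finally show ?thesis .
qed

lemma pos_def_mat_invertible: "pos_def_mat (Q::real^'n::finite^'n) \<Longrightarrow> invertible Q"
  unfolding invertible_det_nz using pos_def_mat_det_pos by (metis less_irrefl)

lemma pos_def_mat_inverse:
  fixes Q :: "real^'n::finite^'n"
  assumes Q: "pos_def_mat Q"
  shows "pos_def_mat (matrix_inv Q)"
proof -
  have inv: "invertible Q" by (rule pos_def_mat_invertible[OF Q])
  have congr: "transpose (matrix_inv Q) ** Q ** matrix_inv Q = matrix_inv Q"
  proof -
    have "transpose (matrix_inv Q) ** Q = transpose (Q ** matrix_inv Q)"
      by (simp add: matrix_transpose_mul pos_def_mat_symmetric[OF Q])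
    also have "\<dots> = mat 1"
      by (simp add: matrix_inv_right[OF inv])
    finally show ?thesis by simp
  qed
  have "invertible (matrix_inv Q)"
    using matrix_inv_left[OF inv] invertible_right_inverse by blast
  from pos_def_mat_congruence[OF Q this] show ?thesis
    unfolding congr .
qed

lemma pos_def_mat_congruent_identity:
  fixes A :: "real^'n::finite^'n"
  assumes "pos_def_mat A"
  obtains R :: "real^'n^'n" where "transpose R ** A ** R = mat 1"
proof -
  obtain L where L: "det L = 1" "pos_def_mat (transpose L ** A ** L)"
    "\<And>i j. i \<noteq> j \<Longrightarrow> (transpose L ** A ** L) $ i $ j = 0"
    "trace (transpose L ** A ** L) < trace A \<or> transpose L ** A ** L = A"
    using pos_def_mat_unit_congruent_diagonal[OF assms] by metis
  define Q where "Q = transpose L ** A ** L"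
  define Dg :: "real^'n^'n" where "Dg = (\<chi> i j. if i = j then 1 / sqrt (Q$i$i) else 0)"
  have "transpose (L ** Dg) ** A ** (L ** Dg) = transpose Dg ** Q ** Dg"
    by (simp add: Q_def matrix_transpose_mul matrix_mul_assoc)
  also have "\<dots> = mat 1"
  proof -
    have pos: "0 < Q$i$i" for i
      using pos_def_mat_diag_pos[OF L(2)] by (simp add: Q_def)
    have off: "Q$i$j = 0" if "i \<noteq> j" for i j
      using L(3)[OF that] by (simp add: Q_def)
    have "(transpose Dg ** Q ** Dg) $ i $ j = (if i = j then 1 else 0)" for i j
      unfolding Dg_def congruence_diagonal_entry
      using pos[of i] off[of i j] by (auto simp flip: power2_eq_square)
    then show ?thesis by (simp add: vec_eq_iff mat_def)
  qed
  finally show ?thesis by (rule that)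
qed

lemma congruence_cancel:
  fixes A B R :: "real^'n::finite^'n"
  assumes R: "invertible R" and eq: "transpose R ** B ** R = transpose R ** A ** R"
  shows "B = A"
proof -
  have left: "transpose (matrix_inv R) ** transpose R = mat 1"
    by (simp add: matrix_inv_right[OF R] flip: matrix_transpose_mul)
  have "transpose (matrix_inv R) ** (transpose R ** X ** R) ** matrix_inv R = X" for X
    by (simp add: matrix_mul_assoc left) (simp add: matrix_inv_right[OF R] flip: matrix_mul_assoc)
  from this[of B] this[of A] eq show ?thesis by metis
qed

section \<open>The log-determinant inequality\<close>

text \<open>Both inequalities below are the matrix form of ln x \<le> x - 1.\<close>

lemma ln_det_le_trace_minus_card:
  fixes C :: "real^'n::finite^'n"
  assumes C: "pos_def_mat C"
  shows "ln (det C) \<le> trace C - real CARD('n)"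
    and "ln (det C) = trace C - real CARD('n) \<Longrightarrow> C = mat 1"
proof -
  obtain L where L: "det L = 1" "pos_def_mat (transpose L ** C ** L)"
    "\<And>i j. i \<noteq> j \<Longrightarrow> (transpose L ** C ** L) $ i $ j = 0"
    "trace (transpose L ** C ** L) < trace C \<or> transpose L ** C ** L = C"
    using pos_def_mat_unit_congruent_diagonal[OF C] by metis
  define Q where "Q = transpose L ** C ** L"
  have pos: "0 < Q$i$i" for i
    using pos_def_mat_diag_pos[OF L(2)] by (simp add: Q_def)
  have "det C = det Q"
    using L(1) by (simp only: Q_def det_mul det_transpose)
  also have "\<dots> = (\<Prod>i\<in>UNIV. Q$i$i)"
    using L(3) unfolding Q_def by (rule det_diagonal)
  finally have ln_det: "ln (det C) = (\<Sum>i\<in>UNIV. ln (Q$i$i))"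
    using pos by (simp add: ln_prod less_imp_neq[symmetric])
  have gap: "trace Q - real CARD('n) - ln (det C) = (\<Sum>i\<in>UNIV. Q$i$i - 1 - ln (Q$i$i))"
    by (simp add: ln_det trace_def sum_subtractf)
  have gap_nonneg: "0 \<le> Q$i$i - 1 - ln (Q$i$i)" for i
    using ln_le_minus_one[OF pos[of i]] by simp
  then have gap_sum_nonneg: "0 \<le> (\<Sum>i\<in>UNIV. Q$i$i - 1 - ln (Q$i$i))"
    by (rule sum_nonneg)
  have trace_le: "trace Q < trace C \<or> Q = C"
    using L(4) by (simp add: Q_def)
  show "ln (det C) \<le> trace C - real CARD('n)"
    using trace_le gap gap_sum_nonneg by auto
  assume eq: "ln (det C) = trace C - real CARD('n)"
  then have "Q = C"
    using trace_le gap gap_sum_nonneg by auto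
  then have "(\<Sum>i\<in>UNIV. Q$i$i - 1 - ln (Q$i$i)) = 0"
    using gap eq by simp
  then have "Q$i$i - 1 - ln (Q$i$i) = 0" for i
    using gap_nonneg by (simp add: sum_nonneg_eq_0_iff)
  then have "Q$i$i = 1" for i
    using ln_eq_minus_one[OF pos[of i]] by simp
  then have "Q = mat 1"
    using L(3) by (auto simp: vec_eq_iff mat_def Q_def)
  with \<open>Q = C\<close> show "C = mat 1" by simp
qed

lemma ln_det_diff_le_trace:
  fixes A B :: "real^'n::finite^'n"
  assumes A: "pos_def_mat A" and B: "pos_def_mat B"
  shows "ln (det B) - ln (det A) \<le> trace (matrix_inv A ** B) - real CARD('n)"
    and "ln (det B) - ln (det A) = trace (matrix_inv A ** B) - real CARD('n) \<Longrightarrow> B = A"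
proof -
  obtain R :: "real^'n^'n" where R: "transpose R ** A ** R = mat 1"
    using pos_def_mat_congruent_identity[OF A] by blast
  have det_R: "det R * det A * det R = 1"
    using arg_cong[OF R, of det] by (simp only: det_mul det_transpose det_I)
  then have inv_R: "invertible R"
    unfolding invertible_det_nz by auto
  define C where "C = transpose R ** B ** R"
  have C: "pos_def_mat C"
    unfolding C_def by (rule pos_def_mat_congruence[OF B inv_R])
  have ln_det_C: "ln (det C) = ln (det B) - ln (det A)"
  proof -
    have "det C * det A = det B"
      using det_R unfolding C_def det_mul det_transpose by algebra
    then show ?thesis
      using pos_def_mat_det_pos[OF A] pos_def_mat_det_pos[OF B]
      by (metis ln_div nonzero_eq_divide_eq order_less_irrefl)
  qed
  have trace_C: "trace (matrix_inv A ** B) = trace C"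
  proof -
    have "(R ** transpose R) ** A = mat 1"
      using R matrix_left_right_inverse by (metis matrix_mul_assoc)
    then have "matrix_inv A = R ** transpose R"
      by (intro matrix_inv_unique) (simp add: matrix_left_right_inverse)
    then show ?thesis
      using trace_mul_sym[of R "transpose R ** B"] by (simp add: C_def matrix_mul_assoc)
  qed
  show "ln (det B) - ln (det A) \<le> trace (matrix_inv A ** B) - real CARD('n)"
    using ln_det_le_trace_minus_card(1)[OF C] ln_det_C trace_C by simp
  assume "ln (det B) - ln (det A) = trace (matrix_inv A ** B) - real CARD('n)"
  then have "C = mat 1"
    using ln_det_le_trace_minus_card(2)[OF C] ln_det_C trace_C by simp
  then show "B = A"
    using congruence_cancel[OF inv_R] R by (simp add: C_def)
qed

section \<open>Perturbations of positive definite matrices\<close>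

lemma matrix_inv_entry_cramer:
  fixes A :: "real^'n::finite^'n"
  assumes A: "invertible A"
  shows "matrix_inv A $ k $ i = det (\<chi> r c. if c = k then mat 1 $ r $ i else A $ r $ c) / det A"
proof -
  have "A *v column i (matrix_inv A) = column i (A ** matrix_inv A)"
    by (simp add: vec_eq_iff column_def matrix_vector_mult_def matrix_matrix_mult_def)
  then have col: "A *v column i (matrix_inv A) = column i (mat 1)"
    by (simp add: matrix_inv_right[OF A])
  have "det (\<chi> r c. if c = k then column i (mat 1) $ r else A $ r $ c) = matrix_inv A $ k $ i * det A"
    using cramer_lemma[where A = A and k = k and x = "column i (matrix_inv A)"]
    unfolding col by (simp only: column_def vec_lambda_beta)
  then have "det (\<chi> r c. if c = k then mat 1 $ r $ i else A $ r $ c) = matrix_inv A $ k $ i * det A"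
    by (simp only: column_def vec_lambda_beta)
  moreover have "det A \<noteq> 0"
    using A invertible_det_nz by blast
  ultimately show ?thesis by simp
qed

lemma tendsto_det:
  fixes f :: "'a \<Rightarrow> real^'n::finite^'n"
  assumes "(f \<longlongrightarrow> A) F"
  shows "((\<lambda>t. det (f t)) \<longlongrightarrow> det A) F"
  unfolding det_def by (intro tendsto_intros assms)

lemma tendsto_matrix_inv:
  fixes f :: "'a \<Rightarrow> real^'n::finite^'n"
  assumes lim: "(f \<longlongrightarrow> A) F" and A: "invertible A"
  shows "((\<lambda>t. matrix_inv (f t)) \<longlongrightarrow> matrix_inv A) F"
proof (intro vec_tendstoI)
  fix k i
  define N where "N = (\<lambda>B :: real^'n^'n. \<chi> r c. if c = k then mat 1 $ r $ i else B $ r $ c)"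
  have det_A: "det A \<noteq> 0"
    using A invertible_det_nz by blast
  have "((\<lambda>t. det (N (f t)) / det (f t)) \<longlongrightarrow> det (N A) / det A) F"
  proof (intro tendsto_divide tendsto_det det_A lim)
    show "((\<lambda>t. N (f t)) \<longlongrightarrow> N A) F"
      unfolding N_def
    proof (intro tendsto_vec_lambda)
      fix r c
      show "((\<lambda>t. if c = k then mat 1 $ r $ i else f t $ r $ c) \<longlongrightarrow>
              (if c = k then mat 1 $ r $ i else A $ r $ c)) F"
        using tendsto_vec_nth[OF tendsto_vec_nth[OF lim]] by simp
    qed
  qed
  moreover have "eventually (\<lambda>t. det (f t) \<noteq> 0) F"
    using tendsto_imp_eventually_ne[OF tendsto_det[OF lim] det_A] .
  then have "eventually (\<lambda>t. det (N (f t)) / det (f t) = matrix_inv (f t) $ k $ i) F"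
    by eventually_elim (simp add: N_def invertible_det_nz matrix_inv_entry_cramer)
  moreover have "det (N A) / det A = matrix_inv A $ k $ i"
    by (simp add: N_def matrix_inv_entry_cramer[OF A])
  ultimately show "((\<lambda>t. matrix_inv (f t) $ k $ i) \<longlongrightarrow> matrix_inv A $ k $ i) F"
    using Lim_transform_eventually by fastforce
qed

lemma pos_def_mat_coercive:
  fixes A :: "real^'n::finite^'n"
  assumes A: "pos_def_mat A"
  obtains m where "0 < m" "\<And>x. m * (norm x)^2 \<le> x \<bullet> (A *v x)"
proof -
  have cont: "continuous_on (sphere 0 1) (\<lambda>x::real^'n. x \<bullet> (A *v x))"
    by (intro continuous_intros linear_continuous_on) (simp add: linear_conv_bounded_linear[symmetric])
  have "sphere (0::real^'n) 1 \<noteq> {}"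
    using norm_axis_1[of undefined] by (metis mem_sphere_0 empty_iff)
  then obtain x0 where x0: "x0 \<in> sphere 0 1" "\<And>y. y \<in> sphere 0 1 \<Longrightarrow> x0 \<bullet> (A *v x0) \<le> y \<bullet> (A *v y)"
    using continuous_attains_inf[OF compact_sphere _ cont] by blast
  have "x0 \<bullet> (A *v x0) * (norm x)^2 \<le> x \<bullet> (A *v x)" for x
  proof (cases "x = 0")
    case False
    define u where "u = (1 / norm x) *\<^sub>R x"
    have u: "u \<in> sphere 0 1" using False by (simp add: u_def)
    have xu: "x = norm x *\<^sub>R u" using False by (simp add: u_def)
    have "x \<bullet> (A *v x) = (u \<bullet> (A *v u)) * (norm x)^2"
      by (subst (1 2) xu) (simp add: matrix_vector_mult_scaleR power2_eq_square)
    then show ?thesis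
      using x0(2)[OF u] by (simp add: mult_right_mono)
  qed simp
  moreover have "0 < x0 \<bullet> (A *v x0)"
    using A x0(1) unfolding pos_def_mat_def by (metis norm_zero mem_sphere_0 zero_neq_one)
  ultimately show ?thesis by (rule that[rotated])
qed

lemma quadratic_form_bounded:
  fixes H :: "real^'n::finite^'n"
  obtains M where "0 \<le> M" "\<And>x. \<bar>x \<bullet> (H *v x)\<bar> \<le> M * (norm x)^2"
proof -
  have "bounded_linear (\<lambda>x::real^'n. H *v x)"
    by (simp add: linear_conv_bounded_linear[symmetric])
  then obtain K where K: "\<And>x. norm (H *v x) \<le> norm x * K" and "0 < K"
    using bounded_linear.pos_bounded by blast
  have "\<bar>x \<bullet> (H *v x)\<bar> \<le> K * (norm x)^2" for x
  proof -
    have "\<bar>x \<bullet> (H *v x)\<bar> \<le> norm x * norm (H *v x)" by (rule Cauchy_Schwarz_ineq2)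
    also have "\<dots> \<le> norm x * (norm x * K)" using K by (simp add: mult_left_mono)
    finally show ?thesis by (simp add: power2_eq_square mult_ac)
  qed
  then show ?thesis using \<open>0 < K\<close> that[of K] by simp
qed

lemma pos_def_mat_perturb:
  fixes A H :: "real^'n::finite^'n"
  assumes A: "pos_def_mat A" and H: "transpose H = H"
  obtains d where "0 < d" "\<And>t. \<bar>t\<bar> < d \<Longrightarrow> pos_def_mat (A + t *\<^sub>R H)"
proof -
  obtain m where m: "0 < m" "\<And>x. m * (norm x)^2 \<le> x \<bullet> (A *v x)"
    using pos_def_mat_coercive[OF A] by blast
  obtain M where M: "0 \<le> M" "\<And>x. \<bar>x \<bullet> (H *v x)\<bar> \<le> M * (norm x)^2"
    using quadratic_form_bounded by blast
  have "pos_def_mat (A + t *\<^sub>R H)" if t: "\<bar>t\<bar> < m / (M + 1)" for t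
    unfolding pos_def_mat_def
  proof safe
    show "transpose (A + t *\<^sub>R H) = A + t *\<^sub>R H"
      using pos_def_mat_symmetric[OF A] H by (simp add: transpose_add transpose_scalar)
  next
    fix x :: "real^'n"
    assume "x \<noteq> 0"
    have "\<bar>t\<bar> * M \<le> \<bar>t\<bar> * (M + 1)" by (simp add: distrib_left)
    also have "\<dots> < m" using t M(1) by (simp add: field_simps)
    finally have "\<bar>t\<bar> * M * (norm x)^2 < m * (norm x)^2"
      using \<open>x \<noteq> 0\<close> by simp
    moreover have "\<bar>t * (x \<bullet> (H *v x))\<bar> \<le> \<bar>t\<bar> * M * (norm x)^2"
      using M(2)[of x] by (simp add: abs_mult mult.assoc mult_left_mono)
    moreover have "x \<bullet> ((A + t *\<^sub>R H) *v x) = x \<bullet> (A *v x) + t * (x \<bullet> (H *v x))"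
      by (simp add: matrix_vector_mult_add_rdistrib scaleR_matrix_vector_assoc[symmetric] inner_add_right)
    ultimately show "0 < x \<bullet> ((A + t *\<^sub>R H) *v x)"
      using m(2)[of x] by linarith
  qed
  moreover have "0 < m / (M + 1)"
    using m(1) M(1) by simp
  ultimately show ?thesis using that by blast
qed

section \<open>The log-determinant loss\<close>

text \<open>The MDE minimises logdet_loss Khat; the MLE, as a concentration matrix, minimises
  logdet_loss S.\<close>

definition logdet_loss :: "real^'n::finite^'n \<Rightarrow> real^'n^'n \<Rightarrow> real" where
  "logdet_loss K \<Sigma> = - ln (det \<Sigma>) + trace (\<Sigma> ** K)"

lemma logdet_loss_first_order:
  fixes A H K :: "real^'n::finite^'n"
  assumes A: "pos_def_mat A" and H: "transpose H = H" and "0 < d"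
    and min: "\<And>t. 0 < t \<Longrightarrow> t < d \<Longrightarrow> pos_def_mat (A + t *\<^sub>R H) \<Longrightarrow>
                logdet_loss K A \<le> logdet_loss K (A + t *\<^sub>R H)"
  shows "trace (matrix_inv A ** H) \<le> trace (H ** K)"
proof -
  obtain d' where "0 < d'" and pd: "\<And>t. \<bar>t\<bar> < d' \<Longrightarrow> pos_def_mat (A + t *\<^sub>R H)"
    using pos_def_mat_perturb[OF A H] by blast
  define X where "X t = A + t *\<^sub>R H" for t
  have bound: "trace (matrix_inv (X t) ** H) \<le> trace (H ** K)" if t: "0 < t" "t < min d d'" for t
  proof -
    have X: "pos_def_mat (X t)"
      using pd t by (simp add: X_def)
    have "matrix_inv (X t) ** A = mat 1 - t *\<^sub>R (matrix_inv (X t) ** H)"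
      using matrix_inv_left[OF pos_def_mat_invertible[OF X]]
      by (simp add: X_def matrix_add_ldistrib matrix_scalar_ac eq_diff_eq
          flip: scalar_matrix_assoc)
    then have "ln (det A) - ln (det (X t)) \<le> - t * trace (matrix_inv (X t) ** H)"
      using ln_det_diff_le_trace(1)[OF X A] by (simp add: trace_sub trace_I trace_scaleR)
    moreover have "logdet_loss K A \<le> logdet_loss K (X t)"
      using min X t by (simp add: X_def)
    then have "ln (det (X t)) - ln (det A) \<le> t * trace (H ** K)"
      by (simp add: logdet_loss_def X_def matrix_add_rdistrib trace_add trace_scaleR
          scalar_matrix_assoc[symmetric])
    ultimately have "t * trace (matrix_inv (X t) ** H) \<le> t * trace (H ** K)"
      by simp
    then show ?thesis using t by simp
  qed
  have "(X \<longlongrightarrow> A) (at_right 0)"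
    unfolding X_def by (auto intro!: tendsto_eq_intros)
  then have "((\<lambda>t. matrix_inv (X t)) \<longlongrightarrow> matrix_inv A) (at_right 0)"
    using tendsto_matrix_inv pos_def_mat_invertible[OF A] by blast
  then have "((\<lambda>t. trace (matrix_inv (X t) ** H)) \<longlongrightarrow> trace (matrix_inv A ** H)) (at_right 0)"
    unfolding trace_matrix_mult by (intro tendsto_sum tendsto_mult_right tendsto_vec_nth)
  moreover have "eventually (\<lambda>t. trace (matrix_inv (X t) ** H) \<le> trace (H ** K)) (at_right 0)"
    unfolding eventually_at_right_field
    using bound \<open>0 < d\<close> \<open>0 < d'\<close> by (intro exI[of _ "min d d'"]) auto
  ultimately show ?thesis
    by (rule tendsto_upperbound) simp
qed

lemma logdet_loss_stationary:
  fixes A H K :: "real^'n::finite^'n"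
  assumes A: "pos_def_mat A" and H: "transpose H = H" and "0 < d"
    and min: "\<And>t. t \<noteq> 0 \<Longrightarrow> \<bar>t\<bar> < d \<Longrightarrow> pos_def_mat (A + t *\<^sub>R H) \<Longrightarrow>
                logdet_loss K A \<le> logdet_loss K (A + t *\<^sub>R H)"
  shows "trace (matrix_inv A ** H) = trace (H ** K)"
proof -
  have "trace (matrix_inv A ** H) \<le> trace (H ** K)"
    using min by (intro logdet_loss_first_order[OF A H \<open>0 < d\<close>]) auto
  moreover have "trace (matrix_inv A ** - H) \<le> trace (- H ** K)"
  proof (rule logdet_loss_first_order[OF A _ \<open>0 < d\<close>])
    show "transpose (- H) = - H"
      using H by (simp add: vec_eq_iff transpose_def)
    fix t :: real
    assume "0 < t" "t < d" "pos_def_mat (A + t *\<^sub>R - H)"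
    then show "logdet_loss K A \<le> logdet_loss K (A + t *\<^sub>R - H)"
      using min[of "- t"] by simp
  qed
  ultimately show ?thesis
    by (simp add: trace_matrix_mult_uminus_left trace_matrix_mult_uminus_right)
qed

lemma logdet_loss_minimizer_unique:
  fixes A B K :: "real^'n::finite^'n"
  assumes A: "pos_def_mat A" and B: "pos_def_mat B"
    and trace_A: "trace (A ** K) \<le> real CARD('n)"
    and trace_B: "trace (matrix_inv A ** B) \<le> trace (B ** K)"
    and min: "logdet_loss K B \<le> logdet_loss K A"
  shows "B = A"
proof (rule ln_det_diff_le_trace(2)[OF A B])
  show "ln (det B) - ln (det A) = trace (matrix_inv A ** B) - real CARD('n)"
    using ln_det_diff_le_trace(1)[OF A B] trace_A trace_B min by (simp add: logdet_loss_def)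
qed

section \<open>Optimality conditions of the MLE and the MDE\<close>

definition sym_unit :: "'n::finite \<Rightarrow> 'n \<Rightarrow> real^'n^'n" where
  "sym_unit i j = (\<chi> r c. if (r = i \<and> c = j) \<or> (r = j \<and> c = i) then 1 else 0)"

lemma transpose_sym_unit: "transpose (sym_unit i j) = sym_unit i j"
  by (auto simp: sym_unit_def transpose_def vec_eq_iff)

lemma trace_mult_sym_unit:
  "trace (A ** sym_unit i j) = (if i = j then A$i$i else A$i$j + A$j$i)"
proof -
  have "(\<Sum>c\<in>UNIV. A$r$c * sym_unit i j $ c $ r)
      = (if r = j then A$r$i else 0) + (if r = i \<and> i \<noteq> j then A$r$j else 0)" for r
    by (cases "r = i"; cases "r = j") (auto simp: sym_unit_def if_distrib[of "\<lambda>x. _ * x"] cong: if_cong)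
  then show ?thesis
    by (simp add: trace_matrix_mult sum.distrib)
qed

lemma trace_sym_unit_mult:
  "trace (sym_unit i j ** A) = (if i = j then A$i$i else A$i$j + A$j$i)"
  by (metis trace_mult_sym_unit trace_mul_sym)

text \<open>Conditions (ii), (iii) and the half of (iv) that concerns Sigma-hat.\<close>

definition ggm_fit :: "('n::finite \<Rightarrow> 'n \<Rightarrow> bool) \<Rightarrow> real^'n^'n \<Rightarrow> real^'n^'n \<Rightarrow> bool" where
  "ggm_fit E S \<Sigma> \<longleftrightarrow> pos_def_mat \<Sigma> \<and> (\<forall>i j. i = j \<or> E i j \<longrightarrow> \<Sigma> $ i $ j = S $ i $ j) \<and>
     (\<forall>i j. i \<noteq> j \<and> \<not> E i j \<longrightarrow> matrix_inv \<Sigma> $ i $ j = 0)"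

lemma ggm_mle_minimizes:
  assumes "ggm_mle E S K" "pos_def_mat K'" "\<And>i j. i \<noteq> j \<Longrightarrow> \<not> E i j \<Longrightarrow> K' $ i $ j = 0"
  shows "logdet_loss S K \<le> logdet_loss S K'"
  using assms unfolding ggm_mle_def logdet_loss_def by (auto simp: trace_mul_sym[of S])

lemma ggm_mle_fit:
  fixes E :: "'n::finite \<Rightarrow> 'n \<Rightarrow> bool"
  assumes E_sym: "\<And>i j. E i j = E j i" and S_sym: "\<And>i j. S $ i $ j = S $ j $ i"
    and mle: "ggm_mle E S K"
  shows "ggm_fit E S (matrix_inv K)"
proof -
  have K: "pos_def_mat K" and K_zero: "\<And>i j. i \<noteq> j \<Longrightarrow> \<not> E i j \<Longrightarrow> K $ i $ j = 0"
    using mle unfolding ggm_mle_def by auto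
  have "matrix_inv K $ i $ j = S $ i $ j" if ij: "i = j \<or> E i j" for i j
  proof -
    have "trace (matrix_inv K ** sym_unit i j) = trace (sym_unit i j ** S)"
    proof (rule logdet_loss_stationary[OF K transpose_sym_unit zero_less_one])
      fix t :: real
      assume "pos_def_mat (K + t *\<^sub>R sym_unit i j)"
      moreover have "(K + t *\<^sub>R sym_unit i j) $ r $ c = 0" if "r \<noteq> c" "\<not> E r c" for r c
        using K_zero[OF that] ij that E_sym by (auto simp: sym_unit_def)
      ultimately show "logdet_loss S K \<le> logdet_loss S (K + t *\<^sub>R sym_unit i j)"
        by (rule ggm_mle_minimizes[OF mle])
    qed
    then show ?thesis
      using pos_def_mat_entry_sym[OF pos_def_mat_inverse[OF K], of i j] S_sym[of i j]
      by (simp add: trace_mult_sym_unit trace_sym_unit_mult split: if_splits)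
  qed
  then show ?thesis
    unfolding ggm_fit_def
    using pos_def_mat_inverse[OF K] K_zero matrix_inv_inv[OF pos_def_mat_invertible[OF K]] by auto
qed

lemma ggm_fit_unique:
  fixes E :: "'n::finite \<Rightarrow> 'n \<Rightarrow> bool"
  assumes E_sym: "\<And>i j. E i j = E j i" and mle: "ggm_mle E S K" and fit: "ggm_fit E S \<Sigma>"
  shows "\<Sigma> = matrix_inv K"
proof -
  have K: "pos_def_mat K" and K_zero: "\<And>i j. i \<noteq> j \<Longrightarrow> \<not> E i j \<Longrightarrow> K $ i $ j = 0"
    using mle unfolding ggm_mle_def by auto
  have \<Sigma>: "pos_def_mat \<Sigma>" and \<Sigma>_S: "\<And>i j. i = j \<or> E i j \<Longrightarrow> \<Sigma> $ i $ j = S $ i $ j"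
    and P_zero: "\<And>i j. i \<noteq> j \<Longrightarrow> \<not> E i j \<Longrightarrow> matrix_inv \<Sigma> $ i $ j = 0"
    using fit unfolding ggm_fit_def by auto
  define P where "P = matrix_inv \<Sigma>"
  have inv_\<Sigma>: "invertible \<Sigma>" by (rule pos_def_mat_invertible[OF \<Sigma>])
  have P: "pos_def_mat P"
    unfolding P_def by (rule pos_def_mat_inverse[OF \<Sigma>])
  have "trace (P ** S) = trace (P ** \<Sigma>)"
    unfolding trace_mul_sym[of P]
    by (rule trace_mult_eq_on_support) (metis \<Sigma>_S E_sym P_zero P_def)
  also have "\<dots> = real CARD('n)"
    by (simp add: P_def matrix_inv_left[OF inv_\<Sigma>] trace_I)
  finally have trace_P: "trace (P ** S) \<le> real CARD('n)" by simp
  have "trace (matrix_inv P ** K) = trace (S ** K)"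
    unfolding P_def matrix_inv_inv[OF inv_\<Sigma>]
    by (rule trace_mult_eq_on_support) (metis \<Sigma>_S E_sym K_zero)
  then have trace_K: "trace (matrix_inv P ** K) \<le> trace (K ** S)"
    by (simp add: trace_mul_sym[of S])
  have "K = P"
    using ggm_mle_minimizes[OF mle P] P_zero
    by (intro logdet_loss_minimizer_unique[OF P K trace_P trace_K]) (simp add: P_def)
  then show ?thesis
    by (simp add: P_def matrix_inv_inv[OF inv_\<Sigma>])
qed

text \<open>Conditions (i) and (iv)-(vii) on Sigma-check for K = Khat: given the zero pattern of Khat,
  (vi) and the rest of (iv) say exactly that the inverse agrees with K off the edges, as E is
  irreflexive.\<close>

definition mde_kkt :: "('n::finite \<Rightarrow> 'n \<Rightarrow> bool) \<Rightarrow> real^'n^'n \<Rightarrow> real^'n^'n \<Rightarrow> bool" where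
  "mde_kkt E K \<Sigma> \<longleftrightarrow> pos_def_mat \<Sigma> \<and> (\<forall>i j. E i j \<longrightarrow> 0 \<le> \<Sigma> $ i $ j) \<and>
     (\<forall>i j. \<not> E i j \<longrightarrow> matrix_inv \<Sigma> $ i $ j = K $ i $ j) \<and>
     (\<forall>i j. E i j \<longrightarrow> matrix_inv \<Sigma> $ i $ j \<le> K $ i $ j) \<and>
     (\<forall>i j. E i j \<longrightarrow> \<Sigma> $ i $ j * (K $ i $ j - matrix_inv \<Sigma> $ i $ j) = 0)"

lemma mde_minimizes:
  assumes "mde E K \<Sigma>" "pos_def_mat \<Sigma>'" "\<And>i j. E i j \<Longrightarrow> 0 \<le> \<Sigma>' $ i $ j"
  shows "logdet_loss K \<Sigma> \<le> logdet_loss K \<Sigma>'"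
  using assms unfolding mde_def logdet_loss_def by auto

lemma mde_imp_kkt:
  fixes E :: "'n::finite \<Rightarrow> 'n \<Rightarrow> bool"
  assumes E_sym: "\<And>i j. E i j = E j i" and K_sym: "\<And>i j. K $ i $ j = K $ j $ i"
    and mde: "mde E K \<Sigma>"
  shows "mde_kkt E K \<Sigma>"
proof -
  have \<Sigma>: "pos_def_mat \<Sigma>" and nonneg: "\<And>i j. E i j \<Longrightarrow> 0 \<le> \<Sigma> $ i $ j"
    using mde unfolding mde_def by auto
  define C where "C = matrix_inv \<Sigma>"
  have C_sym: "C $ i $ j = C $ j $ i" for i j
    unfolding C_def by (rule pos_def_mat_entry_sym[OF pos_def_mat_inverse[OF \<Sigma>]])
  have up: "C $ i $ j \<le> K $ i $ j"
    if "0 < d" "\<And>t r c. 0 < t \<Longrightarrow> t < d \<Longrightarrow> E r c \<Longrightarrow> 0 \<le> (\<Sigma> + t *\<^sub>R sym_unit i j) $ r $ c"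
    for i j d
  proof -
    have "trace (C ** sym_unit i j) \<le> trace (sym_unit i j ** K)"
      unfolding C_def using that mde_minimizes[OF mde]
      by (intro logdet_loss_first_order[OF \<Sigma> transpose_sym_unit \<open>0 < d\<close>]) auto
    then show ?thesis
      using C_sym[of i j] K_sym[of i j]
      by (simp add: trace_mult_sym_unit trace_sym_unit_mult split: if_splits)
  qed
  have down: "K $ i $ j \<le> C $ i $ j"
    if "0 < d" "\<And>t r c. 0 < t \<Longrightarrow> t < d \<Longrightarrow> E r c \<Longrightarrow> 0 \<le> (\<Sigma> - t *\<^sub>R sym_unit i j) $ r $ c"
    for i j d
  proof -
    have "transpose (- sym_unit i j) = - sym_unit i j"
      by (simp add: vec_eq_iff transpose_def sym_unit_def)
    then have "trace (C ** - sym_unit i j) \<le> trace (- sym_unit i j ** K)"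
      unfolding C_def using that mde_minimizes[OF mde]
      by (intro logdet_loss_first_order[OF \<Sigma> _ \<open>0 < d\<close>]) auto
    then show ?thesis
      using C_sym[of i j] K_sym[of i j]
      by (simp add: trace_matrix_mult_uminus_left trace_matrix_mult_uminus_right
          trace_mult_sym_unit trace_sym_unit_mult split: if_splits)
  qed
  have off: "C $ i $ j = K $ i $ j" if "\<not> E i j" for i j
  proof -
    have "sym_unit i j $ r $ c = 0" if "E r c" for r c
      using \<open>\<not> E i j\<close> that E_sym by (auto simp: sym_unit_def)
    then have "C $ i $ j \<le> K $ i $ j" "K $ i $ j \<le> C $ i $ j"
      by (intro up[OF zero_less_one] down[OF zero_less_one]; simp add: nonneg)+
    then show ?thesis by simp
  qed
  have edge: "C $ i $ j \<le> K $ i $ j" if "E i j" for i j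
    by (rule up[OF zero_less_one]) (simp add: sym_unit_def nonneg)
  have slack: "\<Sigma> $ i $ j * (K $ i $ j - C $ i $ j) = 0" if "E i j" for i j
  proof (cases "\<Sigma> $ i $ j = 0")
    case False
    then have pos: "0 < \<Sigma> $ i $ j"
      using nonneg[OF that] by simp
    have "0 \<le> (\<Sigma> - t *\<^sub>R sym_unit i j) $ r $ c" if "t < \<Sigma> $ i $ j" "E r c" for t r c
      using that nonneg[OF \<open>E r c\<close>] pos_def_mat_entry_sym[OF \<Sigma>, of i j]
      by (auto simp: sym_unit_def)
    then have "K $ i $ j \<le> C $ i $ j"
      by (intro down[OF pos]) auto
    then show ?thesis
      using edge[OF that] by simp
  qed simp
  show ?thesis
    unfolding mde_kkt_def using \<Sigma> nonneg off edge slack by (simp add: C_def)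
qed

lemma mde_kkt_unique:
  fixes E :: "'n::finite \<Rightarrow> 'n \<Rightarrow> bool"
  assumes E_sym: "\<And>i j. E i j = E j i" and mde: "mde E K \<Sigma>\<^sub>0" and kkt: "mde_kkt E K \<Sigma>"
  shows "\<Sigma> = \<Sigma>\<^sub>0"
proof -
  have \<Sigma>: "pos_def_mat \<Sigma>" and nonneg: "\<And>i j. E i j \<Longrightarrow> 0 \<le> \<Sigma> $ i $ j"
    and off: "\<And>i j. \<not> E i j \<Longrightarrow> matrix_inv \<Sigma> $ i $ j = K $ i $ j"
    and edge: "\<And>i j. E i j \<Longrightarrow> matrix_inv \<Sigma> $ i $ j \<le> K $ i $ j"
    and slack: "\<And>i j. E i j \<Longrightarrow> \<Sigma> $ i $ j * (K $ i $ j - matrix_inv \<Sigma> $ i $ j) = 0"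
    using kkt unfolding mde_kkt_def by auto
  have \<Sigma>\<^sub>0: "pos_def_mat \<Sigma>\<^sub>0" and nonneg\<^sub>0: "\<And>i j. E i j \<Longrightarrow> 0 \<le> \<Sigma>\<^sub>0 $ i $ j"
    using mde unfolding mde_def by auto
  define D where "D = K - matrix_inv \<Sigma>"
  have K_eq: "K = matrix_inv \<Sigma> + D"
    by (simp add: D_def)
  have "trace (\<Sigma> ** D) = 0"
    unfolding trace_matrix_mult
  proof (intro sum.neutral ballI)
    fix i j
    show "\<Sigma> $ i $ j * D $ j $ i = 0"
      using off[of j i] slack[of j i] pos_def_mat_entry_sym[OF \<Sigma>, of i j]
      by (cases "E j i") (simp_all add: D_def)
  qed
  then have trace_\<Sigma>: "trace (\<Sigma> ** K) \<le> real CARD('n)"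
    by (simp add: K_eq matrix_add_ldistrib trace_add trace_I
        matrix_inv_right[OF pos_def_mat_invertible[OF \<Sigma>]])
  have "0 \<le> trace (\<Sigma>\<^sub>0 ** D)"
    unfolding trace_matrix_mult
  proof (intro sum_nonneg)
    fix i j
    show "0 \<le> \<Sigma>\<^sub>0 $ i $ j * D $ j $ i"
      using off[of j i] edge[of j i] nonneg\<^sub>0[of i j] E_sym[of i j]
      by (cases "E j i") (simp_all add: D_def)
  qed
  then have trace_\<Sigma>\<^sub>0: "trace (matrix_inv \<Sigma> ** \<Sigma>\<^sub>0) \<le> trace (\<Sigma>\<^sub>0 ** K)"
    by (simp add: K_eq matrix_add_ldistrib trace_add trace_mul_sym[of \<Sigma>\<^sub>0])
  have "logdet_loss K \<Sigma>\<^sub>0 \<le> logdet_loss K \<Sigma>"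
    using mde_minimizes[OF mde \<Sigma>] nonneg by blast
  then show ?thesis
    using logdet_loss_minimizer_unique[OF \<Sigma> \<Sigma>\<^sub>0 trace_\<Sigma> trace_\<Sigma>\<^sub>0] by simp
qed

theorem theorem5p1:
  fixes E :: "'n::finite \<Rightarrow> 'n \<Rightarrow> bool"
    and n :: nat and X :: "nat \<Rightarrow> real^'n"
    and S Khat Scheck :: "real^'n^'n"
  assumes E_sym: "\<forall>i j. E i j = E j i"
    and E_irrefl: "\<forall>i. \<not> E i i"
    and n_pos: "0 < n"
    and S_def: "S = sample_cov n X"
    and mle: "ggm_mle E S Khat"
    and mde_exists: "mde E Khat Scheck"
  shows "mde_system E S (matrix_inv Khat) Scheck \<and>
         (\<forall>Sh Sc. pos_def_mat Sh \<and> pos_def_mat Sc \<and> mde_system E S Sh Sc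
            \<longrightarrow> Sh = matrix_inv Khat \<and> Sc = Scheck)"
proof -
  have S_sym: "S $ i $ j = S $ j $ i" for i j
    by (simp add: S_def sample_cov_def sum_component mult.commute)
  have K: "pos_def_mat Khat"
    using mle unfolding ggm_mle_def by auto
  have inv_inv: "matrix_inv (matrix_inv Khat) = Khat"
    by (rule matrix_inv_inv[OF pos_def_mat_invertible[OF K]])
  have fit: "ggm_fit E S (matrix_inv Khat)"
    using E_sym S_sym mle by (intro ggm_mle_fit) auto
  have kkt: "mde_kkt E Khat Scheck"
    using E_sym pos_def_mat_entry_sym[OF K] mde_exists by (intro mde_imp_kkt) auto
  have system_iff: "pos_def_mat Sh \<and> pos_def_mat Sc \<and> mde_system E S Sh Sc \<longleftrightarrow>
      ggm_fit E S Sh \<and> mde_kkt E (matrix_inv Sh) Sc" for Sh Sc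
    unfolding mde_system_def ggm_fit_def mde_kkt_def using E_irrefl by (auto, metis+)
  show ?thesis
  proof (intro conjI allI impI)
    show "mde_system E S (matrix_inv Khat) Scheck"
      using system_iff[of "matrix_inv Khat" Scheck] fit kkt unfolding inv_inv by blast
  next
    fix Sh Sc
    assume "pos_def_mat Sh \<and> pos_def_mat Sc \<and> mde_system E S Sh Sc"
    then have "ggm_fit E S Sh" "mde_kkt E (matrix_inv Sh) Sc"
      using system_iff by blast+
    moreover from this(1) show "Sh = matrix_inv Khat"
      using E_sym mle by (intro ggm_fit_unique) auto
    ultimately show "Sc = Scheck"
      using E_sym mde_exists inv_inv by (intro mde_kkt_unique) auto
  qed
qed

end
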